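(* Let $m>1$ be an odd integer and let $p$ be the greatest prime dividing $m$. Then for every $\epsilon>0$, $$C_m(a)=o\!\left(a^{\log_p\left(\frac{p+1}{2}\right)+\epsilon}\right)\quad (a\to\infty).$$
   Context: For odd $m\in\mathbb{N}$, $C_m(a)=\#\{0\le s<a : m\nmid \binom{2^{s+1}}{2^s}\}$. *)

theory Defs
  imports Complex_Main "HOL-Computational_Algebra.Primes" "HOL-Library.Landau_Symbols"
begin

definition C :: "nat \<Rightarrow> nat \<Rightarrow> nat" where
  "C m a = card {s. s < a \<and> \<not> m dvd ((2 ^ (s + 1)) choose (2 ^ s))}"

end

(*
  Fix a prime q exactly dividing m to the power j. By Kummer's theorem, q^j does not divide
  binom(2^(s+1), 2^s) iff doubling 2^s in base q produces fewer than j carries, and only the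
  lowest N digits matter for the carries counted up to position N. Lifting the exponent shows
  that the order of 2 modulo q^(K+T) is divisible by q^K, so for s < a <= q^K the residues
  2^s mod q^(K+T) are distinct. Hence the count is at most the number of residues modulo q^N
  (N = K + T) with fewer than j carries. A digit >= (q+1)/2 always causes a carry, so there
  are at most (N+1)^j ((q+1)/2)^N such residues, i.e. a^(log_q((q+1)/2)) up to a power of
  log a. Finally log_q((q+1)/2) increases with q, so the largest prime factor dominates.
*)
theory Submission
  imports Defs "HOL-Number_Theory.Number_Theory" "HOL-Real_Asymp.Real_Asymp"
begin

section \<open>Kummer's theorem for central binomial coefficients\<close>

lemma less_power_self:
  assumes "1 < (q::nat)"
  shows "n < q ^ n"
proof -
  have "n < 2 ^ n" by (rule less_exp)
  also have "(2::nat) ^ n \<le> q ^ n" using assms by (intro power_mono) simp_all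
  finally show ?thesis .
qed

lemma multiplicity_eq_card_prime_power_dvd:
  assumes "prime (q::nat)" "0 < x" "x \<le> N"
  shows "multiplicity q x = card {i\<in>{1..N}. q ^ i dvd x}"
proof -
  have "q ^ multiplicity q x \<le> x"
    using assms(2) by (intro dvd_imp_le multiplicity_dvd)
  moreover have "multiplicity q x < q ^ multiplicity q x"
    using prime_gt_1_nat[OF assms(1)] by (rule less_power_self)
  ultimately have le: "multiplicity q x \<le> N" using assms(3) by linarith
  have dvd_iff: "q ^ i dvd x \<longleftrightarrow> i \<le> multiplicity q x" for i
    using assms(1,2) by (intro power_dvd_iff_le_multiplicity) auto
  have "{i\<in>{1..N}. q ^ i dvd x} = {1..multiplicity q x}"
    using le unfolding dvd_iff by auto
  then show ?thesis by simp
qed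

lemma Suc_div_eq:
  "Suc n div d = n div d + (if d dvd Suc n then 1 else 0)"
  by (simp add: div_Suc dvd_eq_mod_eq_0)

lemma multiplicity_fact:
  assumes "prime (q::nat)" "n \<le> N"
  shows "multiplicity q (fact n :: nat) = (\<Sum>i\<in>{1..N}. n div q ^ i)"
  using assms(2)
proof (induction n)
  case 0
  then show ?case by simp
next
  case (Suc n)
  have "multiplicity q (fact (Suc n) :: nat) = multiplicity q (Suc n * fact n)"
    by (simp only: fact_Suc of_nat_id)
  also have "\<dots> = multiplicity q (Suc n) + multiplicity q (fact n :: nat)"
    using assms(1) by (intro prime_elem_multiplicity_mult_distrib) auto
  also have "multiplicity q (Suc n) = (\<Sum>i\<in>{1..N}. if q ^ i dvd Suc n then 1 else 0)"
    using multiplicity_eq_card_prime_power_dvd[OF assms(1) _ Suc.prems]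
    by (simp add: sum.inter_filter[symmetric])
  also have "multiplicity q (fact n :: nat) = (\<Sum>i\<in>{1..N}. n div q ^ i)"
    using Suc by simp
  finally show ?case
    by (simp add: Suc_div_eq sum.distrib)
qed

lemma double_div_eq:
  assumes "0 < (d::nat)"
  shows "(2 * n) div d = 2 * (n div d) + (if d \<le> 2 * (n mod d) then 1 else 0)"
proof -
  have "2 * n = 2 * (n mod d) + 2 * (n div d) * d"
    using div_mult_mod_eq[of n d] by (metis add.commute add_mult_distrib2 mult.assoc)
  then have "(2 * n) div d = 2 * (n div d) + (2 * (n mod d)) div d"
    using assms by (metis add.commute div_mult_self1 less_not_refl2)
  moreover have "(2 * (n mod d)) div d = (if d \<le> 2 * (n mod d) then 1 else 0)"
    using assms mod_less_divisor[OF assms, of n] by (auto simp: div_eq_0_iff intro!: div_nat_eqI)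
  ultimately show ?thesis by simp
qed

text \<open>Position \<open>i\<close> belongs to the set iff a carry occurs into digit \<open>i\<close> when \<open>r + r\<close> is
  computed in base \<open>q\<close>; only the positions \<open>1, \<dots>, K\<close> are recorded.\<close>
definition carry_positions :: "nat \<Rightarrow> nat \<Rightarrow> nat \<Rightarrow> nat set" where
  "carry_positions q K r = {i\<in>{1..K}. q ^ i \<le> 2 * (r mod q ^ i)}"

lemma finite_carry_positions [simp]: "finite (carry_positions q K r)"
  by (simp add: carry_positions_def)

lemma multiplicity_central_binomial:
  assumes "prime (q::nat)"
  shows "multiplicity q ((2 * n) choose n) = card (carry_positions q (2 * n) n)"
proof -
  have "fact (2 * n) = fact n * fact n * ((2 * n) choose n)"
    using binomial_fact_lemma[of n "2 * n"] by simp
  then have split: "multiplicity q (fact (2 * n) :: nat)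
      = 2 * multiplicity q (fact n :: nat) + multiplicity q ((2 * n) choose n)"
    using assms by (simp add: prime_elem_multiplicity_mult_distrib)
  have "multiplicity q (fact (2 * n) :: nat) = (\<Sum>i\<in>{1..2 * n}. (2 * n) div q ^ i)"
    using assms by (rule multiplicity_fact) simp
  also have "\<dots> = (\<Sum>i\<in>{1..2 * n}. 2 * (n div q ^ i) + (if q ^ i \<le> 2 * (n mod q ^ i) then 1 else 0))"
    using assms by (intro sum.cong) (simp_all add: double_div_eq prime_gt_0_nat)
  also have "\<dots> = 2 * (\<Sum>i\<in>{1..2 * n}. n div q ^ i) + card (carry_positions q (2 * n) n)"
    by (simp add: sum.distrib sum_distrib_left sum.inter_filter[symmetric] carry_positions_def)
  also have "(\<Sum>i\<in>{1..2 * n}. n div q ^ i) = multiplicity q (fact n :: nat)"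
    using assms by (rule multiplicity_fact[symmetric]) simp
  finally show ?thesis using split by simp
qed

lemma card_carry_positions_le_multiplicity:
  assumes "prime (q::nat)"
  shows "card (carry_positions q K n) \<le> multiplicity q ((2 * n) choose n)"
proof -
  have "carry_positions q K n \<subseteq> carry_positions q (2 * n) n"
  proof
    fix i assume i: "i \<in> carry_positions q K n"
    then have "q ^ i \<le> 2 * (n mod q ^ i)" by (simp add: carry_positions_def)
    also have "\<dots> \<le> 2 * n" by simp
    finally have "q ^ i \<le> 2 * n" .
    moreover have "i < q ^ i" using prime_gt_1_nat[OF assms] by (rule less_power_self)
    ultimately show "i \<in> carry_positions q (2 * n) n"
      using i by (simp add: carry_positions_def)
  qed
  then show ?thesis
    by (simp add: card_mono multiplicity_central_binomial[OF assms])
qed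

section \<open>Powers modulo prime powers\<close>

lemma power_prime_of_one_plus_prime_power:
  fixes u :: int
  assumes q: "prime (q::nat)" "odd q" and t: "1 \<le> t" and u: "\<not> int q dvd u"
  shows "\<exists>u'. (1 + int q ^ t * u) ^ q = 1 + int q ^ (t + 1) * u' \<and> \<not> int q dvd u'"
proof -
  define z where "z = int q ^ t * u"
  have q3: "3 \<le> q" using q prime_ge_2_nat[OF q(1)] by presburger
  have "(z + 1) ^ q = (\<Sum>k\<le>q. of_nat (q choose k) * z ^ k)"
    by (simp add: binomial_ring)
  also have "{..q} = {0, 1} \<union> {2..q}" using q3 by auto
  finally have expand: "(z + 1) ^ q = 1 + int q * z + (\<Sum>k\<in>{2..q}. of_nat (q choose k) * z ^ k)"
    by (subst (asm) sum.union_disjoint) auto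
  have "int q ^ (t + 2) dvd of_nat (q choose k) * z ^ k" if k: "k \<in> {2..q}" for k
  proof -
    have zk: "z ^ k = int q ^ (t * k) * u ^ k"
      unfolding z_def by (simp add: power_mult_distrib power_mult)
    show ?thesis
    proof (cases "k = q")
      case True
      have "t * 3 \<le> t * k" using q3 True by simp
      then have "t + 2 \<le> t * k" using t by linarith
      then have "int q ^ (t + 2) dvd int q ^ (t * k)" by (rule le_imp_power_dvd)
      then show ?thesis unfolding zk by (simp add: dvd_mult2)
    next
      case False
      with k have "int q dvd of_nat (q choose k)"
        using dvd_choose_prime[of k q] q(1) by (auto simp flip: of_nat_dvd_iff)
      moreover have "t * 2 \<le> t * k" using k by simp
      then have "t + 1 \<le> t * k" using t by linarith
      then have "int q ^ (t + 1) dvd int q ^ (t * k)" by (rule le_imp_power_dvd)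
      ultimately have "int q * int q ^ (t + 1) dvd of_nat (q choose k) * int q ^ (t * k)"
        by (rule mult_dvd_mono)
      then show ?thesis unfolding zk mult.assoc[symmetric] by (simp add: dvd_mult2)
    qed
  qed
  then have "int q ^ (t + 2) dvd (\<Sum>k\<in>{2..q}. of_nat (q choose k) * z ^ k)"
    by (intro dvd_sum)
  then obtain w where w: "(\<Sum>k\<in>{2..q}. of_nat (q choose k) * z ^ k) = int q ^ (t + 2) * w" ..
  have "(1 + int q ^ t * u) ^ q = 1 + int q ^ (t + 1) * (u + int q * w)"
    using expand w unfolding z_def by (simp add: algebra_simps power_add)
  moreover have "\<not> int q dvd u + int q * w" using u by (simp add: dvd_add_left_iff)
  ultimately show ?thesis by blast
qed

lemma power_prime_power_of_one_plus_prime_power: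
  fixes u :: int
  assumes q: "prime (q::nat)" "odd q" and t: "1 \<le> t" and u: "\<not> int q dvd u"
  shows "\<exists>u'. (1 + int q ^ t * u) ^ (q ^ i) = 1 + int q ^ (t + i) * u' \<and> \<not> int q dvd u'"
proof (induction i)
  case 0
  then show ?case using u by auto
next
  case (Suc i)
  then obtain v where v: "(1 + int q ^ t * u) ^ (q ^ i) = 1 + int q ^ (t + i) * v" "\<not> int q dvd v"
    by blast
  have "(1 + int q ^ t * u) ^ (q ^ Suc i) = ((1 + int q ^ t * u) ^ (q ^ i)) ^ q"
    by (simp add: power_mult[symmetric] mult.commute)
  also have "\<dots> = (1 + int q ^ (t + i) * v) ^ q"
    by (simp only: v(1))
  finally show ?case
    using power_prime_of_one_plus_prime_power[OF q _ v(2), of "t + i"] t by simp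
qed

lemma prime_power_not_dvd_power_of_one_plus_prime_power_minus_1:
  fixes u :: int
  assumes q: "prime (q::nat)" and s: "1 \<le> s" and u: "\<not> int q dvd u" and w: "\<not> q dvd w"
  shows "\<not> int q ^ (s + 1) dvd (1 + int q ^ s * u) ^ w - 1"
proof
  define x where "x = 1 + int q ^ s * u"
  assume dvd: "int q ^ (s + 1) dvd x ^ w - 1"
  have "[x = 1] (mod int q)" unfolding x_def using s by (simp add: cong_iff_dvd_diff)
  then have "[(\<Sum>i<w. x ^ i) = (\<Sum>i<w. 1)] (mod int q)"
    by (intro cong_sum) (metis cong_pow power_one)
  then have "[(\<Sum>i<w. x ^ i) = int w] (mod int q)" by simp
  then have geometric_sum: "\<not> int q dvd (\<Sum>i<w. x ^ i)"
    using w cong_dvd_iff by (fastforce simp: int_dvd_int_iff)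
  have "x ^ w - 1 = int q ^ s * (u * (\<Sum>i<w. x ^ i))"
    using power_diff_1_eq[of x w] unfolding x_def by (simp add: algebra_simps)
  with dvd have "int q ^ s * int q dvd int q ^ s * (u * (\<Sum>i<w. x ^ i))"
    by (simp add: power_add)
  then have "int q dvd u * (\<Sum>i<w. x ^ i)" using q by (simp add: prime_gt_0_nat)
  then show False
    using u geometric_sum q by (simp add: prime_dvd_mult_iff)
qed

text \<open>Writing \<open>b ^ (q - 1) = 1 + q ^ T * u\<close> with \<open>q \<nmid> u\<close>, each further factor \<open>q\<close> in the
  modulus forces one more factor \<open>q\<close> in the exponent.\<close>
lemma prime_power_dvd_exponent_if_power_cong_1:
  assumes q: "prime (q::nat)" "odd q" and b: "1 < b" "\<not> q dvd b"
  obtains T where "\<And>K e. [b ^ e = 1] (mod q ^ (K + T)) \<Longrightarrow> q ^ K dvd e"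
proof -
  define y where "y = int b ^ (q - 1)"
  have "[b ^ (q - 1) = 1] (mod q)"
    using fermat_theorem[OF q(1) b(2)] .
  then have "[y = 1] (mod int q)"
    unfolding y_def by (metis cong_int_iff of_nat_1 of_nat_power)
  then have "int q dvd y - 1"
    by (simp add: cong_iff_dvd_diff)
  have "1 < y" unfolding y_def using b(1) q prime_ge_2_nat[OF q(1)] by simp
  then obtain u where u: "y - 1 = int q ^ multiplicity (int q) (y - 1) * u" "\<not> int q dvd u"
    using multiplicity_decompose'[of "y - 1" "int q"] prime_gt_1_nat[OF q(1)] by auto
  define t where "t = multiplicity (int q) (y - 1)"
  have "1 \<le> t"
    using u \<open>int q dvd y - 1\<close> unfolding t_def by (cases "multiplicity (int q) (y - 1)") auto
  have y: "y = 1 + int q ^ t * u" using u(1) unfolding t_def by simp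
  have exponent: "q ^ K dvd e" if "int q ^ (K + t) dvd y ^ e - 1" for K e
    using that
  proof (induction K arbitrary: e)
    case 0
    then show ?case by simp
  next
    case (Suc K)
    have "int q ^ (K + t) dvd y ^ e - 1"
      using Suc.prems by (rule dvd_trans[rotated]) (simp add: le_imp_power_dvd)
    then obtain f where f: "e = q ^ K * f" using Suc.IH by blast
    obtain v where v: "y ^ (q ^ K) = 1 + int q ^ (t + K) * v" "\<not> int q dvd v"
      using power_prime_power_of_one_plus_prime_power[OF q \<open>1 \<le> t\<close> u(2), of K] y by blast
    have "q dvd f"
    proof (rule ccontr)
      assume "\<not> q dvd f"
      then have "\<not> int q ^ (t + K + 1) dvd (1 + int q ^ (t + K) * v) ^ f - 1"
        using prime_power_not_dvd_power_of_one_plus_prime_power_minus_1[OF q(1) _ v(2)] \<open>1 \<le> t\<close>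
        by simp
      moreover have "y ^ e = (1 + int q ^ (t + K) * v) ^ f"
        unfolding f power_mult v(1) ..
      ultimately show False using Suc.prems by (simp add: ac_simps)
    qed
    then show ?case using f by (auto simp: mult.commute)
  qed
  show ?thesis
  proof (rule that)
    fix K e assume "[b ^ e = 1] (mod q ^ (K + t))"
    then have "int q ^ (K + t) dvd int b ^ e - 1"
      by (metis cong_int_iff cong_iff_dvd_diff of_nat_1 of_nat_power)
    also have "int b ^ e - 1 dvd y ^ e - 1"
      using power_diff_1_eq[of "int b ^ e" "q - 1"] unfolding y_def
      by (simp add: power_mult[symmetric] mult.commute)
    finally show "q ^ K dvd e" by (rule exponent)
  qed
qed

lemma inj_on_power_mod_prime_power:
  assumes q: "prime (q::nat)" "odd q" and b: "1 < b" "\<not> q dvd b"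
  obtains T where "\<And>K. inj_on (\<lambda>s. b ^ s mod q ^ (K + T)) {..<q ^ K}"
proof -
  obtain T where T: "\<And>K e. [b ^ e = 1] (mod q ^ (K + T)) \<Longrightarrow> q ^ K dvd e"
    using prime_power_dvd_exponent_if_power_cong_1[OF assms] by blast
  have "inj_on (\<lambda>s. b ^ s mod q ^ (K + T)) {..<q ^ K}" for K
  proof (rule linorder_inj_onI')
    fix s s' assume s': "s' \<in> {..<q ^ K}" and "s < s'"
    define e where "e = s' - s"
    have e: "s' = s + e" "0 < e" "e < q ^ K"
      using s' \<open>s < s'\<close> unfolding e_def by auto
    show "b ^ s mod q ^ (K + T) \<noteq> b ^ s' mod q ^ (K + T)"
    proof
      assume "b ^ s mod q ^ (K + T) = b ^ s' mod q ^ (K + T)"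
      then have "[b ^ s * 1 = b ^ s * b ^ e] (mod q ^ (K + T))"
        by (simp add: e(1) power_add unique_euclidean_semiring_class.cong_def)
      moreover have "coprime (b ^ s) (q ^ (K + T))"
        using prime_imp_coprime[OF q(1) b(2)] by (simp add: coprime_commute)
      ultimately have "[1 = b ^ e] (mod q ^ (K + T))"
        by (simp only: cong_mult_lcancel_nat)
      then have "[b ^ e = 1] (mod q ^ (K + T))"
        by (rule cong_sym)
      then have "q ^ K dvd e" by (rule T)
      with e(2,3) show False by (simp add: nat_dvd_not_less)
    qed
  qed
  then show ?thesis by (rule that)
qed

section \<open>Residues with few carries\<close>

definition few_carry_residues :: "nat \<Rightarrow> nat \<Rightarrow> nat \<Rightarrow> nat set" where
  "few_carry_residues q K j = {r. r < q ^ K \<and> card (carry_positions q K r) < j}"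

lemma finite_few_carry_residues [simp]: "finite (few_carry_residues q K j)"
  by (rule finite_subset[of _ "{..<q ^ K}"]) (auto simp: few_carry_residues_def)

lemma carry_positions_mod: "carry_positions q K (r mod q ^ K) = carry_positions q K r"
  unfolding carry_positions_def by (auto simp: mod_mod_cancel le_imp_power_dvd)

lemma carry_positions_Suc:
  "carry_positions q (Suc K) r
    = carry_positions q K r \<union> (if q ^ Suc K \<le> 2 * (r mod q ^ Suc K) then {Suc K} else {})"
  unfolding carry_positions_def by (auto simp: le_Suc_eq)

text \<open>Splitting off the leading base-\<open>q\<close> digit \<open>d\<close>: a digit \<open>d \<ge> (q + 1) div 2\<close> produces
  a carry at the new top position.\<close>
lemma few_carry_residues_Suc_subset:
  assumes "0 < q"
  shows "few_carry_residues q (Suc K) j \<subseteq> (\<lambda>(d, r). d * q ^ K + r) `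
    ({..<(q + 1) div 2} \<times> few_carry_residues q K j \<union>
     {(q + 1) div 2..<q} \<times> few_carry_residues q K (j - 1))"
    (is "_ \<subseteq> _ ` (?Low \<union> ?High)")
proof
  fix r assume r: "r \<in> few_carry_residues q (Suc K) j"
  define d where "d = r div q ^ K"
  define r' where "r' = r mod q ^ K"
  have r_eq: "r = d * q ^ K + r'" unfolding d_def r'_def by (rule div_mult_mod_eq[symmetric])
  have r_less: "r < q * q ^ K" and carries: "card (carry_positions q (Suc K) r) < j"
    using r by (auto simp: few_carry_residues_def)
  have "d < q" unfolding d_def using r_less by (simp add: less_mult_imp_div_less)
  have r'_less: "r' < q ^ K" unfolding r'_def using assms by simp
  have same_carries: "carry_positions q K r' = carry_positions q K r"
    unfolding r'_def by (rule carry_positions_mod)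
  show "r \<in> (\<lambda>(d, r). d * q ^ K + r) ` (?Low \<union> ?High)"
  proof (cases "d < (q + 1) div 2")
    case True
    have "card (carry_positions q K r) \<le> card (carry_positions q (Suc K) r)"
      by (intro card_mono) (auto simp: carry_positions_Suc)
    then have "(d, r') \<in> ?Low"
      using True carries r'_less same_carries by (simp add: few_carry_residues_def)
    then show ?thesis using r_eq by force
  next
    case False
    then have "q \<le> 2 * d" by presburger
    then have "q * q ^ K \<le> 2 * (d * q ^ K)" by (simp add: mult.assoc[symmetric])
    also have "\<dots> \<le> 2 * (r mod q ^ Suc K)" using r_eq r_less by simp
    finally have "carry_positions q (Suc K) r = insert (Suc K) (carry_positions q K r)"
      by (simp add: carry_positions_Suc)
    moreover have "Suc K \<notin> carry_positions q K r" by (simp add: carry_positions_def)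
    ultimately have "card (carry_positions q (Suc K) r) = Suc (card (carry_positions q K r))"
      by simp
    then have "(d, r') \<in> ?High"
      using False \<open>d < q\<close> carries r'_less same_carries by (simp add: few_carry_residues_def)
    then show ?thesis using r_eq by force
  qed
qed

lemma card_few_carry_residues_le:
  assumes "0 < q"
  shows "card (few_carry_residues q K j) \<le> (K + 1) ^ j * ((q + 1) div 2) ^ K"
proof (induction K arbitrary: j)
  case 0
  have "few_carry_residues q 0 j \<subseteq> {0}" by (auto simp: few_carry_residues_def)
  then have "card (few_carry_residues q 0 j) \<le> card {0::nat}" by (rule card_mono[rotated]) simp
  then show ?case by simp
next
  case (Suc K)
  define h where "h = (q + 1) div 2"
  show ?case
  proof (cases j)
    case 0
    then show ?thesis by (simp add: few_carry_residues_def)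
  next
    case j: (Suc j')
    let ?Low = "{..<h} \<times> few_carry_residues q K j"
    let ?High = "{h..<q} \<times> few_carry_residues q K j'"
    have "card (few_carry_residues q (Suc K) j) \<le> card ((\<lambda>(d, r). d * q ^ K + r) ` (?Low \<union> ?High))"
      using few_carry_residues_Suc_subset[OF assms, of K j] j unfolding h_def
      by (intro card_mono) simp_all
    also have "\<dots> \<le> card (?Low \<union> ?High)"
      by (intro card_image_le) simp
    also have "\<dots> \<le> card ?Low + card ?High"
      by (rule card_Un_le)
    also have "\<dots> = h * card (few_carry_residues q K j) + (q - h) * card (few_carry_residues q K j')"
      by (simp only: card_cartesian_product card_lessThan card_atLeastLessThan)
    also have "\<dots> \<le> h * ((K + 1) ^ j * h ^ K) + h * ((K + 1) ^ j' * h ^ K)"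
    proof (intro add_mono mult_mono)
      show "q - h \<le> h" unfolding h_def by simp
    qed (use Suc.IH[of j] Suc.IH[of j'] in \<open>simp_all add: h_def\<close>)
    also have "\<dots> = (K + 1) ^ j' * (K + 2) * h ^ Suc K"
      using j by (simp add: algebra_simps)
    also have "\<dots> \<le> (K + 2) ^ j' * (K + 2) * h ^ Suc K"
      by (intro mult_right_mono power_mono) simp_all
    also have "\<dots> = (Suc K + 1) ^ j * ((q + 1) div 2) ^ Suc K"
      using j by (simp add: h_def)
    finally show ?thesis .
  qed
qed

lemma C_prime_power_le:
  assumes q: "prime (q::nat)" "odd q"
  obtains T where "\<And>a K j. a \<le> q ^ K \<Longrightarrow> C (q ^ j) a \<le> (K + T + 1) ^ j * ((q + 1) div 2) ^ (K + T)"
proof -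
  have "\<not> q dvd 2"
    using q prime_ge_2_nat[OF q(1)] by (auto dest: dvd_imp_le)
  then obtain T where inj: "\<And>K. inj_on (\<lambda>s. 2 ^ s mod q ^ (K + T)) {..<q ^ K}"
    using inj_on_power_mod_prime_power[OF q, of 2] by auto
  have "C (q ^ j) a \<le> (K + T + 1) ^ j * ((q + 1) div 2) ^ (K + T)" if "a \<le> q ^ K" for a K j
  proof -
    let ?X = "{s. s < a \<and> \<not> q ^ j dvd (2 ^ (s + 1) choose 2 ^ s)}"
    let ?residue = "\<lambda>s. 2 ^ s mod q ^ (K + T)"
    have "?residue ` ?X \<subseteq> few_carry_residues q (K + T) j"
    proof
      fix r assume "r \<in> ?residue ` ?X"
      then obtain s where s: "s \<in> ?X" and r: "r = ?residue s" by blast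
      have "\<not> q ^ j dvd ((2 * 2 ^ s) choose 2 ^ s)" using s by simp
      then have "multiplicity q ((2 * 2 ^ s) choose 2 ^ s) < j"
        using power_dvd_iff_le_multiplicity[of "(2 * 2 ^ s) choose 2 ^ s" q j] prime_gt_1_nat[OF q(1)]
        by auto
      then have "card (carry_positions q (K + T) (2 ^ s)) < j"
        using card_carry_positions_le_multiplicity[OF q(1), of "K + T" "2 ^ s"] by linarith
      then show "r \<in> few_carry_residues q (K + T) j"
        unfolding r using prime_gt_0_nat[OF q(1)]
        by (simp add: few_carry_residues_def carry_positions_mod)
    qed
    moreover have "inj_on ?residue ?X"
      using inj by (rule inj_on_subset) (use that in auto)
    ultimately have "card ?X \<le> card (few_carry_residues q (K + T) j)"
      by (simp add: card_inj_on_le)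
    also have "\<dots> \<le> (K + T + 1) ^ j * ((q + 1) div 2) ^ (K + T)"
      using prime_gt_0_nat[OF q(1)] by (rule card_few_carry_residues_le)
    finally show ?thesis unfolding C_def .
  qed
  then show ?thesis by (rule that)
qed

section \<open>Asymptotics\<close>

lemma succ_mul_ln_half_succ_le:
  fixes x :: real
  assumes "1 \<le> x"
  shows "(x + 1) * ln ((x + 1) / 2) \<le> x * ln x"
proof -
  define f where "f y = y * ln y - (y + 1) * ln ((y + 1) / 2)" for y :: real
  have "f 1 \<le> f x"
  proof (rule DERIV_nonneg_imp_nondecreasing[OF assms])
    fix y :: real assume "1 \<le> y"
    then have "(f has_real_derivative ln y - ln ((y + 1) / 2)) (at y)"
      unfolding f_def by (auto intro!: derivative_eq_intros simp: field_simps)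
    moreover have "ln ((y + 1) / 2) \<le> ln y" using \<open>1 \<le> y\<close> by simp
    ultimately show "\<exists>d. (f has_real_derivative d) (at y) \<and> 0 \<le> d" by auto
  qed
  then show ?thesis by (simp add: f_def)
qed

lemma ln_half_succ_div_ln_mono:
  fixes x y :: real
  assumes "1 < x" "x \<le> y"
  shows "ln ((x + 1) / 2) / ln x \<le> ln ((y + 1) / 2) / ln y"
proof (rule DERIV_nonneg_imp_nondecreasing[OF assms(2)])
  fix z :: real assume "x \<le> z"
  with assms have "1 < z" by simp
  then have "((\<lambda>z. ln ((z + 1) / 2) / ln z) has_real_derivative
      (ln z / (z + 1) - ln ((z + 1) / 2) / z) / (ln z)\<^sup>2) (at z)"
    by (auto intro!: derivative_eq_intros simp: field_simps power2_eq_square)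
  moreover have "ln ((z + 1) / 2) / z \<le> ln z / (z + 1)"
    using succ_mul_ln_half_succ_le[of z] \<open>1 < z\<close> by (simp add: field_simps)
  ultimately show "\<exists>d. ((\<lambda>z. ln ((z + 1) / 2) / ln z) has_real_derivative d) (at z) \<and> 0 \<le> d"
    by force
qed

lemma C_prime_power_smallo:
  assumes q: "prime (q::nat)" "odd q" and "0 < \<epsilon>"
  shows "(\<lambda>a. real (C (q ^ j) a)) \<in> o(\<lambda>a. real a powr (log q ((real q + 1) / 2) + \<epsilon>))"
proof -
  obtain T where T: "\<And>a K j. a \<le> q ^ K \<Longrightarrow> C (q ^ j) a \<le> (K + T + 1) ^ j * ((q + 1) div 2) ^ (K + T)"
    by (rule C_prime_power_le[OF q]) (rule that)
  define h where "h = (real q + 1) / 2"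
  have q3: "3 \<le> q" using q prime_ge_2_nat[OF q(1)] by presburger
  have h: "real ((q + 1) div 2) = h" "2 \<le> h"
    using q3 \<open>odd q\<close> unfolding h_def by (auto elim!: oddE)
  define B where "B a = h ^ (T + 1) * (log q (real a) + real T + 2) ^ j * real a powr log q h"
    for a :: nat
  have bound: "real (C (q ^ j) a) \<le> B a"
    if "1 \<le> a" for a :: nat
  proof -
    define K where "K = nat \<lceil>log q (real a)\<rceil>"
    have log_nonneg: "0 \<le> log q (real a)" using that q3 by simp
    have K_le: "real K \<le> log q (real a) + 1" and log_le: "log q (real a) \<le> real K"
      unfolding K_def using log_nonneg by linarith+
    have "real a = real q powr log q (real a)" using that q3 by simp
    also have "\<dots> \<le> real q powr real K" using log_le q3 by (intro powr_mono) auto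
    finally have "a \<le> q ^ K" using q3 by (simp add: powr_realpow flip: of_nat_power of_nat_le_iff)
    then have "real (C (q ^ j) a)
        \<le> real ((K + T + 1) ^ j * ((q + 1) div 2) ^ (K + T))"
      by (intro of_nat_mono T)
    also have "\<dots> = (real K + real T + 1) ^ j * h ^ (K + T)"
      using h(1) by (simp add: add.commute)
    also have "\<dots> \<le> (log q (real a) + real T + 2) ^ j * (h ^ T * (h * real a powr log q h))"
    proof (intro mult_mono power_mono)
      have "h ^ K = h powr real K" using h(2) by (simp add: powr_realpow)
      also have "\<dots> \<le> h powr (log q (real a) + 1)" using h(2) K_le by (intro powr_mono) auto
      also have "\<dots> = h * h powr log q (real a)"
        using h(2) by (simp add: powr_add)
      also have "h powr log q (real a) = real a powr log q h"
        using h(2) that by (simp add: powr_def log_def)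
      finally show "h ^ (K + T) \<le> h ^ T * (h * real a powr log q h)"
        using h(2) by (simp add: power_add mult.commute)
    qed (use K_le log_nonneg h(2) in auto)
    also have "\<dots> = B a" unfolding B_def by (simp add: algebra_simps)
    finally show ?thesis .
  qed
  have "(\<lambda>a. real (C (q ^ j) a)) \<in> O(B)"
  proof (intro bigoI[of _ 1] eventually_mono[OF eventually_ge_at_top[of 1]])
    fix a :: nat assume "1 \<le> a"
    from order_trans[OF bound[OF this] abs_ge_self]
    show "norm (real (C (q ^ j) a)) \<le> 1 * norm (B a)"
      by simp
  qed
  also have "B \<in> o(\<lambda>a. real a powr log q h * real a powr \<epsilon>)"
    unfolding B_def using \<open>0 < \<epsilon>\<close> q3 by real_asymp
  finally show ?thesis by (simp add: h_def powr_add)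
qed

lemma dvd_if_prime_power_factors_dvd:
  assumes "(m::nat) \<noteq> 0" and "\<And>q. q \<in> prime_factors m \<Longrightarrow> q ^ multiplicity q m dvd x"
  shows "m dvd x"
proof (cases "x = 0")
  case False
  show ?thesis
  proof (rule multiplicity_le_imp_dvd[OF assms(1)])
    fix q :: nat assume q: "prime q"
    show "multiplicity q m \<le> multiplicity q x"
    proof (cases "q \<in> prime_factors m")
      case True
      then have "q ^ multiplicity q m dvd x" by (rule assms(2))
      with \<open>x \<noteq> 0\<close> show ?thesis
        using power_dvd_iff_le_multiplicity[of x q] prime_gt_1_nat[OF q] by simp
    next
      case False
      then show ?thesis
        using assms(1) q by (simp add: in_prime_factors_iff not_dvd_imp_multiplicity_0)
    qed
  qed
qed simp

lemma card_not_dvd_le_sum_prime_factors: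
  assumes "(m::nat) \<noteq> 0" "finite A"
  shows "card {s\<in>A. \<not> m dvd f s} \<le> (\<Sum>q\<in>prime_factors m. card {s\<in>A. \<not> q ^ multiplicity q m dvd f s})"
proof -
  have "{s\<in>A. \<not> m dvd f s} \<subseteq> (\<Union>q\<in>prime_factors m. {s\<in>A. \<not> q ^ multiplicity q m dvd f s})"
    using dvd_if_prime_power_factors_dvd[OF assms(1)] by blast
  then have "card {s\<in>A. \<not> m dvd f s}
      \<le> card (\<Union>q\<in>prime_factors m. {s\<in>A. \<not> q ^ multiplicity q m dvd f s})"
    using assms(2) by (intro card_mono) auto
  also have "\<dots> \<le> (\<Sum>q\<in>prime_factors m. card {s\<in>A. \<not> q ^ multiplicity q m dvd f s})"
    by (rule card_UN_le) simp
  finally show ?thesis .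
qed

lemma C_le_sum_prime_factors:
  assumes "(m::nat) \<noteq> 0"
  shows "C m a \<le> (\<Sum>q\<in>prime_factors m. C (q ^ multiplicity q m) a)"
  using card_not_dvd_le_sum_prime_factors[OF assms, of "{..<a}" "\<lambda>s. 2 ^ (s + 1) choose 2 ^ s"]
  by (simp add: C_def)

theorem theorem3p2:
  fixes m :: nat and p :: nat and \<epsilon> :: real
  assumes "odd m" and "m > 1"
    and "p = Max (prime_factors m)"
    and "\<epsilon> > 0"
  shows "(\<lambda>a. real (C m a)) \<in> o(\<lambda>a. real a powr (log (real p) ((real p + 1) / 2) + \<epsilon>))"
proof -
  define \<alpha> where "\<alpha> = log (real p) ((real p + 1) / 2)"
  have "(\<lambda>a. real (C (q ^ multiplicity q m) a)) \<in> o(\<lambda>a. real a powr (\<alpha> + \<epsilon>))"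
    if "q \<in> prime_factors m" for q
  proof -
    have q: "prime q" "q dvd m" "q \<le> p"
      using that assms(3) by (auto simp: in_prime_factors_iff)
    then have "odd q" using assms(1) by (auto intro: dvd_trans)
    have "log q ((real q + 1) / 2) \<le> \<alpha>"
      using ln_half_succ_div_ln_mono[of q p] q prime_gt_1_nat[OF q(1)] unfolding \<alpha>_def log_def by simp
    then show ?thesis
      using C_prime_power_smallo[OF q(1) \<open>odd q\<close>, of "\<alpha> + \<epsilon> - log q ((real q + 1) / 2)"] assms(4)
      by simp
  qed
  then have "(\<lambda>a. \<Sum>q\<in>prime_factors m. real (C (q ^ multiplicity q m) a))
      \<in> o(\<lambda>a. real a powr (\<alpha> + \<epsilon>))"
    by (rule big_sum_in_smallo)
  moreover have
    "(\<lambda>a. real (C m a)) \<in> O(\<lambda>a. \<Sum>q\<in>prime_factors m. real (C (q ^ multiplicity q m) a))"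
    using C_le_sum_prime_factors[of m] assms(2)
    by (intro bigoI[of _ 1] always_eventually allI) (simp flip: of_nat_sum)
  ultimately show ?thesis
    unfolding \<alpha>_def by (rule landau_o.big_small_trans[rotated])
qed

end
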